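(* Let $G$ be a residually finite group and let $A$ be a finite set. Suppose that $X \subset A^G$ is a strongly irreducible subshift of finite type containing a periodic configuration. Then $X$ is surjunctive and its automorphism group $\mathrm{Aut}(X)$ is residually finite. If in addition $G$ is countable, then $X$ admits a $G$-invariant Borel probability measure with full support.
   Context: $A^G=\{x\colon G\to A\}$ carries the prodiscrete topology and the $G$-shift action $(gx)(h)=x(g^{-1}h)$. A subshift is a closed $G$-invariant subset of $A^G$. A configuration is periodic if its $G$-orbit is finite. A subshift $X$ is of finite type if there are a finite $\Omega\subset G$ and $\mathcal P\subset A^\Omega$ with $X=\{x\in A^G:(gx)|_\Omega\in\mathcal P\ \forall g\in G\}$. $X$ is strongly irreducible if there is a finite $\Delta\subset G$ such that for all finite $\Omega_1,\Omega_2\subset G$ with $\Omega_1\Delta^{-1}\cap\Omega_2=\varnothing$ and all $x_1,x_2\in X$ there is $x\in X$ with $x|_{\Omega_1}=x_1|_{\Omega_1}$, $x|_{\Omega_2}=x_2|_{\Omega_2}$. A cellular automaton on $X$ is a continuous $G$-equivariant map $X\to X$; $X$ is surjunctive if every injective cellular automaton $X\to X$ is surjective; $\mathrm{Aut}(X)$ is the group of bijective cellular automata $X\to X$ under composition. A group is residually finite if the intersection of its finite-index subgroups is trivial. *)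

theory Defs
  imports "HOL-Probability.Probability" "HOL-Algebra.Coset"
begin

definition fullshift :: "('g, 'b) monoid_scheme \<Rightarrow> 'a set \<Rightarrow> ('g \<Rightarrow> 'a) set" where
  "fullshift G A = (carrier G \<rightarrow>\<^sub>E A)"

definition prodiscrete :: "('g, 'b) monoid_scheme \<Rightarrow> 'a set \<Rightarrow> ('g \<Rightarrow> 'a) topology" where
  "prodiscrete G A = product_topology (\<lambda>_. discrete_topology A) (carrier G)"

definition shift :: "('g, 'b) monoid_scheme \<Rightarrow> 'g \<Rightarrow> ('g \<Rightarrow> 'a) \<Rightarrow> ('g \<Rightarrow> 'a)" where
  "shift G g x = (\<lambda>h\<in>carrier G. x (inv\<^bsub>G\<^esub> g \<otimes>\<^bsub>G\<^esub> h))"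

definition subshift :: "('g, 'b) monoid_scheme \<Rightarrow> 'a set \<Rightarrow> ('g \<Rightarrow> 'a) set \<Rightarrow> bool" where
  "subshift G A X \<longleftrightarrow> X \<subseteq> fullshift G A \<and> closedin (prodiscrete G A) X
     \<and> (\<forall>g\<in>carrier G. \<forall>x\<in>X. shift G g x \<in> X)"

definition periodic :: "('g, 'b) monoid_scheme \<Rightarrow> ('g \<Rightarrow> 'a) \<Rightarrow> bool" where
  "periodic G x \<longleftrightarrow> finite ((\<lambda>g. shift G g x) ` carrier G)"

definition finite_type :: "('g, 'b) monoid_scheme \<Rightarrow> 'a set \<Rightarrow> ('g \<Rightarrow> 'a) set \<Rightarrow> bool" where
  "finite_type G A X \<longleftrightarrow> (\<exists>\<Omega> P. finite \<Omega> \<and> \<Omega> \<subseteq> carrier G \<and> P \<subseteq> (\<Omega> \<rightarrow>\<^sub>E A) \<and>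
      X = {x \<in> fullshift G A. \<forall>g\<in>carrier G. restrict (shift G g x) \<Omega> \<in> P})"

definition strongly_irreducible :: "('g, 'b) monoid_scheme \<Rightarrow> ('g \<Rightarrow> 'a) set \<Rightarrow> bool" where
  "strongly_irreducible G X \<longleftrightarrow> (\<exists>\<Delta>. finite \<Delta> \<and> \<Delta> \<subseteq> carrier G \<and>
     (\<forall>\<Omega>1 \<Omega>2. finite \<Omega>1 \<and> \<Omega>1 \<subseteq> carrier G \<and> finite \<Omega>2 \<and> \<Omega>2 \<subseteq> carrier G \<and>
        {a \<otimes>\<^bsub>G\<^esub> inv\<^bsub>G\<^esub> d | a d. a \<in> \<Omega>1 \<and> d \<in> \<Delta>} \<inter> \<Omega>2 = {} \<longrightarrow>
        (\<forall>x1\<in>X. \<forall>x2\<in>X. \<exists>x\<in>X. (\<forall>h\<in>\<Omega>1. x h = x1 h) \<and> (\<forall>h\<in>\<Omega>2. x h = x2 h))))"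

definition cellular_automaton ::
  "('g, 'b) monoid_scheme \<Rightarrow> 'a set \<Rightarrow> ('g \<Rightarrow> 'a) set \<Rightarrow> (('g \<Rightarrow> 'a) \<Rightarrow> ('g \<Rightarrow> 'a)) \<Rightarrow> bool" where
  "cellular_automaton G A X \<tau> \<longleftrightarrow>
     continuous_map (subtopology (prodiscrete G A) X) (subtopology (prodiscrete G A) X) \<tau>
     \<and> (\<forall>g\<in>carrier G. \<forall>x\<in>X. \<tau> (shift G g x) = shift G g (\<tau> x))"

definition surjunctive :: "('g, 'b) monoid_scheme \<Rightarrow> 'a set \<Rightarrow> ('g \<Rightarrow> 'a) set \<Rightarrow> bool" where
  "surjunctive G A X \<longleftrightarrow>
     (\<forall>\<tau>. cellular_automaton G A X \<tau> \<and> inj_on \<tau> X \<longrightarrow> \<tau> ` X = X)"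

definition Aut :: "('g, 'b) monoid_scheme \<Rightarrow> 'a set \<Rightarrow> ('g \<Rightarrow> 'a) set \<Rightarrow>
    (('g \<Rightarrow> 'a) \<Rightarrow> ('g \<Rightarrow> 'a)) monoid" where
  "Aut G A X = \<lparr> carrier = {\<tau> \<in> extensional X. cellular_automaton G A X \<tau> \<and> bij_betw \<tau> X X},
                mult = (\<lambda>\<sigma> \<tau>. restrict (\<sigma> \<circ> \<tau>) X),
                one = restrict id X \<rparr>"

definition residually_finite :: "('g, 'b) monoid_scheme \<Rightarrow> bool" where
  "residually_finite H \<longleftrightarrow>
     \<Inter>{K. subgroup K H \<and> finite (rcosets\<^bsub>H\<^esub> K)} = {\<one>\<^bsub>H\<^esub>}"

definition borel_of :: "'x topology \<Rightarrow> 'x measure" where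
  "borel_of T = sigma (topspace T) {U. openin T U}"

end

theory Submission
  imports Defs
begin

text \<open>
  Periodic configurations are dense in \<open>X\<close>. To approximate \<open>x \<in> X\<close> on a finite set \<open>E\<close>, strong
  irreducibility glues \<open>x|E\<close> to a periodic \<open>y \<in> X\<close>; residual finiteness then provides a
  finite-index subgroup \<open>K\<close> of the stabilizer of \<open>y\<close> whose translates of a neighbourhood of
  \<open>E\<close> are pairwise disjoint, so the glued pattern can be repeated along \<open>K\<close>, and the finite
  type condition shows that the repetition stays in \<open>X\<close>.

  For a finite-index subgroup \<open>H\<close> the set \<open>Fix H\<close> of \<open>H\<close>-invariant configurations of \<open>X\<close> is
  finite, so an injective cellular automaton permutes it. Since every periodic configuration
  lies in such a set, the closed image of an injective cellular automaton contains a dense set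
  and is all of \<open>X\<close>; and an automorphism moving some point moves a periodic one, hence lies
  outside the finite-index kernel of the action of \<open>Aut X\<close> on some \<open>Fix H\<close>. For countable
  \<open>G\<close>, a countable dense set of periodic configurations has finite orbits \<open>Y\<^sub>i\<close>, and the
  mixture of the uniform distributions on the \<open>Y\<^sub>i\<close> with weights \<open>2\<^sup>-\<^sup>i\<^sup>-\<^sup>1\<close> is an invariant
  probability measure charging every nonempty open set.
\<close>

lemma topspace_prodiscrete: "topspace (prodiscrete G A) = fullshift G A"
  by (simp add: prodiscrete_def fullshift_def topspace_product_topology)

lemma compact_space_prodiscrete: "finite A \<Longrightarrow> compact_space (prodiscrete G A)"
  by (simp add: prodiscrete_def compact_space_product_topology compact_space_discrete_topology)

lemma Hausdorff_space_prodiscrete: "Hausdorff_space (prodiscrete G A)"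
  by (simp add: prodiscrete_def Hausdorff_space_product_topology Hausdorff_space_discrete_topology)

lemma openin_prodiscrete_contains_cylinder:
  assumes "openin (prodiscrete G A) U" "u \<in> U"
  obtains E where "finite E" "E \<subseteq> carrier G"
    "\<And>v. v \<in> fullshift G A \<Longrightarrow> (\<forall>h\<in>E. v h = u h) \<Longrightarrow> v \<in> U"
proof -
  have "\<forall>x\<in>U. \<exists>V. finite {i \<in> carrier G. V i \<noteq> A} \<and>
      (\<forall>i\<in>carrier G. openin (discrete_topology A) (V i)) \<and>
      x \<in> (\<Pi>\<^sub>E i\<in>carrier G. V i) \<and> (\<Pi>\<^sub>E i\<in>carrier G. V i) \<subseteq> U"
    using assms(1)
    unfolding prodiscrete_def openin_product_topology_alt topspace_discrete_topology .
  then obtain V where V: "finite {i \<in> carrier G. V i \<noteq> A}" "u \<in> (\<Pi>\<^sub>E i\<in>carrier G. V i)"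
     "(\<Pi>\<^sub>E i\<in>carrier G. V i) \<subseteq> U"
    using assms(2) by (elim ballE exE conjE) auto
  have "v \<in> U" if "v \<in> fullshift G A" "\<forall>h\<in>{i \<in> carrier G. V i \<noteq> A}. v h = u h" for v
  proof -
    have "v \<in> (\<Pi>\<^sub>E i\<in>carrier G. V i)"
      using that V(2) unfolding fullshift_def by (auto simp: PiE_iff)
    then show ?thesis using V(3) by blast
  qed
  with V(1) show thesis by (intro that[of "{i \<in> carrier G. V i \<noteq> A}"]) auto
qed

context group
begin

lemma shift_apply: "h \<in> carrier G \<Longrightarrow> shift G g x h = x (inv g \<otimes> h)"
  by (simp add: shift_def)

lemma shift_shift:
  assumes "g \<in> carrier G" "g' \<in> carrier G"
  shows "shift G g (shift G g' x) = shift G (g \<otimes> g') x"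
proof
  fix h show "shift G g (shift G g' x) h = shift G (g \<otimes> g') x h"
    using assms by (cases "h \<in> carrier G") (auto simp: shift_def inv_mult_group m_assoc)
qed

lemma shift_one: "x \<in> fullshift G A \<Longrightarrow> shift G \<one> x = x"
  by (auto simp: shift_def fullshift_def PiE_def extensional_def)

lemma shift_inv_shift:
  "x \<in> fullshift G A \<Longrightarrow> g \<in> carrier G \<Longrightarrow> shift G (inv g) (shift G g x) = x"
  by (simp add: shift_shift shift_one)

lemma shift_shift_inv:
  "x \<in> fullshift G A \<Longrightarrow> g \<in> carrier G \<Longrightarrow> shift G g (shift G (inv g) x) = x"
  by (simp add: shift_shift shift_one)

lemma continuous_map_shift:
  assumes g: "g \<in> carrier G"
  shows "continuous_map (prodiscrete G A) (prodiscrete G A) (shift G g)"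
  unfolding prodiscrete_def continuous_map_componentwise
proof (intro conjI ballI)
  show "shift G g ` topspace (product_topology (\<lambda>_. discrete_topology A) (carrier G))
      \<subseteq> extensional (carrier G)"
    by (auto simp: shift_def)
  fix k assume k: "k \<in> carrier G"
  have "continuous_map (product_topology (\<lambda>_. discrete_topology A) (carrier G))
      (discrete_topology A) (\<lambda>x. x (inv g \<otimes> k))"
    using continuous_map_product_projection[of "inv g \<otimes> k" "carrier G" "\<lambda>_. discrete_topology A"]
      g k
    by simp
  then show "continuous_map (product_topology (\<lambda>_. discrete_topology A) (carrier G))
      (discrete_topology A) (\<lambda>x. shift G g x k)"
    by (rule continuous_map_eq) (simp add: shift_apply k)
qed

section \<open>Subgroups of finite index\<close>

definition finite_index :: "'a set \<Rightarrow> bool" where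
  "finite_index K \<longleftrightarrow> subgroup K G \<and> finite (rcosets K)"

lemma finite_rcosets_by_map:
  assumes H: "subgroup H G" and "finite S" and \<phi>: "\<And>a. a \<in> carrier G \<Longrightarrow> \<phi> a \<in> S"
    and sep: "\<And>a b. a \<in> carrier G \<Longrightarrow> b \<in> carrier G \<Longrightarrow> \<phi> a = \<phi> b \<Longrightarrow> a \<otimes> inv b \<in> H"
  shows "finite (rcosets H)"
proof -
  define \<psi> where "\<psi> s = H #> (SOME b. b \<in> carrier G \<and> \<phi> b = s)" for s
  have "H #> a = \<psi> (\<phi> a)" if a: "a \<in> carrier G" for a
  proof -
    define b where "b = (SOME b. b \<in> carrier G \<and> \<phi> b = \<phi> a)"
    have b: "b \<in> carrier G" "\<phi> b = \<phi> a"
      using someI[of "\<lambda>b. b \<in> carrier G \<and> \<phi> b = \<phi> a" a] a unfolding b_def by auto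
    have "a \<in> H #> b"
      using sep[OF a b(1)] a b by (intro subgroup.rcos_module_rev[OF H is_group]) auto
    then show ?thesis
      using repr_independence[OF _ b(1) H] unfolding \<psi>_def b_def[symmetric] by simp
  qed
  then have "rcosets H \<subseteq> \<psi> ` S"
    using \<phi> unfolding RCOSETS_def by blast
  then show ?thesis
    using finite_surj[OF \<open>finite S\<close>] by blast
qed

lemma finite_index_carrier: "finite_index (carrier G)"
proof -
  have "rcosets (carrier G) \<subseteq> {carrier G}"
    using subgroup.rcos_const[OF subgroup_self is_group] by (auto simp: RCOSETS_def)
  then show ?thesis
    using subgroup_self finite_subset by (auto simp: finite_index_def)
qed

lemma finite_index_Int:
  assumes "finite_index K1" "finite_index K2"
  shows "finite_index (K1 \<inter> K2)"
proof -
  have K1: "subgroup K1 G" and K2: "subgroup K2 G"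
    using assms by (auto simp: finite_index_def)
  have "finite (rcosets (K1 \<inter> K2))"
  proof (rule finite_rcosets_by_map[OF subgroups_Inter_pair[OF K1 K2],
        of "(rcosets K1) \<times> (rcosets K2)" "\<lambda>a. (K1 #> a, K2 #> a)"])
    show "finite ((rcosets K1) \<times> (rcosets K2))"
      using assms by (auto simp: finite_index_def)
    show "(K1 #> a, K2 #> a) \<in> (rcosets K1) \<times> (rcosets K2)" if "a \<in> carrier G" for a
      using that K1 K2 by (auto intro!: rcosetsI dest: subgroup.subset)
    fix a b assume a: "a \<in> carrier G" and b: "b \<in> carrier G"
      and eq: "(K1 #> a, K2 #> a) = (K1 #> b, K2 #> b)"
    have "a \<in> K1 #> b" "a \<in> K2 #> b"
      using eq rcos_self[OF a K1] rcos_self[OF a K2] by auto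
    then show "a \<otimes> inv b \<in> K1 \<inter> K2"
      using subgroup.rcos_module_imp[OF K1 is_group b] subgroup.rcos_module_imp[OF K2 is_group b]
      by auto
  qed
  then show ?thesis
    using subgroups_Inter_pair[OF K1 K2] by (simp add: finite_index_def)
qed

lemma finite_index_transversal:
  assumes "finite_index H"
  obtains R where "finite R" "R \<subseteq> carrier G" "\<And>g. g \<in> carrier G \<Longrightarrow> \<exists>h\<in>H. \<exists>r\<in>R. g = h \<otimes> r"
proof -
  have H: "subgroup H G"
    using assms by (simp add: finite_index_def)
  have "rcosets H = (\<lambda>a. H #> a) ` carrier G"
    by (auto simp: RCOSETS_def)
  then obtain R where R: "R \<subseteq> carrier G" "finite R" "rcosets H = (\<lambda>a. H #> a) ` R"
    using finite_subset_image[of "rcosets H" "\<lambda>a. H #> a" "carrier G"] assms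
    by (auto simp: finite_index_def)
  have "\<exists>h\<in>H. \<exists>r\<in>R. g = h \<otimes> r" if g: "g \<in> carrier G" for g
  proof -
    have "H #> g \<in> rcosets H"
      using g H by (auto intro!: rcosetsI dest: subgroup.subset)
    then obtain r where r: "r \<in> R" "H #> g = H #> r"
      using R(3) by auto
    then have "g \<in> H #> r"
      using rcos_self[OF g H] by simp
    then show ?thesis
      using r(1) unfolding r_coset_def by blast
  qed
  with R(1,2) show thesis
    by (intro that) auto
qed

lemma residually_finite_iff:
  "residually_finite G \<longleftrightarrow> (\<forall>g\<in>carrier G - {\<one>}. \<exists>K. finite_index K \<and> g \<notin> K)"
proof -
  let ?Fam = "{K. finite_index K}"
  have "\<one> \<in> \<Inter>?Fam"
    by (auto simp: finite_index_def subgroup.one_closed)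
  moreover have "\<Inter>?Fam \<subseteq> carrier G"
    using finite_index_carrier by blast
  ultimately have "\<Inter>?Fam = {\<one>} \<longleftrightarrow> (\<forall>g\<in>carrier G - {\<one>}. g \<notin> \<Inter>?Fam)"
    by blast
  then show ?thesis
    unfolding residually_finite_def finite_index_def by blast
qed

lemma finite_index_avoiding:
  assumes "residually_finite G" and "finite S" "S \<subseteq> carrier G - {\<one>}" and "finite_index H"
  obtains K where "finite_index K" "K \<subseteq> H" "K \<inter> S = {}"
proof -
  have "\<exists>K. finite_index K \<and> K \<subseteq> H \<and> K \<inter> S = {}"
    using \<open>finite S\<close> \<open>S \<subseteq> carrier G - {\<one>}\<close>
  proof (induction S rule: finite_induct)
    case empty
    then show ?case using assms(4) by auto
  next
    case (insert s S)
    then obtain K where K: "finite_index K" "K \<subseteq> H" "K \<inter> S = {}"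
      by auto
    obtain K' where "finite_index K'" "s \<notin> K'"
      using assms(1) insert.prems by (auto simp: residually_finite_iff)
    then show ?case
      using K finite_index_Int[OF K(1)] by (intro exI[of _ "K \<inter> K'"]) auto
  qed
  then show thesis
    using that by blast
qed

definition shift_orbit :: "('a \<Rightarrow> 'c) \<Rightarrow> ('a \<Rightarrow> 'c) set" where
  "shift_orbit x = (\<lambda>g. shift G g x) ` carrier G"

lemma periodic_iff_finite_shift_orbit: "periodic G x \<longleftrightarrow> finite (shift_orbit x)"
  by (simp add: periodic_def shift_orbit_def)

lemma self_in_shift_orbit: "x \<in> fullshift G A \<Longrightarrow> x \<in> shift_orbit x"
  using shift_one[of x A] by (force simp: shift_orbit_def)

lemma shift_image_shift_orbit:
  assumes "g \<in> carrier G"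
  shows "shift G g ` shift_orbit x = shift_orbit x"
proof
  show "shift G g ` shift_orbit x \<subseteq> shift_orbit x"
    using assms by (auto simp: shift_orbit_def shift_shift)
  show "shift_orbit x \<subseteq> shift G g ` shift_orbit x"
  proof
    fix y assume "y \<in> shift_orbit x"
    then obtain g' where g': "g' \<in> carrier G" "y = shift G g' x" by (auto simp: shift_orbit_def)
    then have "y = shift G g (shift G (inv g \<otimes> g') x)"
      using assms by (simp add: shift_shift m_assoc[symmetric])
    moreover have "shift G (inv g \<otimes> g') x \<in> shift_orbit x"
      using g' assms by (auto simp: shift_orbit_def)
    ultimately show "y \<in> shift G g ` shift_orbit x" by blast
  qed
qed

definition stabilizer :: "('a \<Rightarrow> 'c) \<Rightarrow> 'a set" where
  "stabilizer x = {g \<in> carrier G. shift G g x = x}"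

lemma subgroup_stabilizer:
  assumes "x \<in> fullshift G A"
  shows "subgroup (stabilizer x) G"
proof (rule subgroupI)
  show "stabilizer x \<subseteq> carrier G" "stabilizer x \<noteq> {}"
    using assms shift_one by (auto simp: stabilizer_def)
  fix g g' assume "g \<in> stabilizer x" "g' \<in> stabilizer x"
  then show "inv g \<in> stabilizer x" "g \<otimes> g' \<in> stabilizer x"
    using assms shift_inv_shift[of x A g] by (auto simp: stabilizer_def shift_shift[symmetric])
qed

lemma finite_index_stabilizer:
  assumes "x \<in> fullshift G A" "periodic G x"
  shows "finite_index (stabilizer x)"
proof -
  have "finite (rcosets (stabilizer x))"
  proof (rule finite_rcosets_by_map[OF subgroup_stabilizer[OF assms(1)],
        of "shift_orbit x" "\<lambda>a. shift G (inv a) x"])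
    show "finite (shift_orbit x)"
      using assms(2) by (simp add: periodic_iff_finite_shift_orbit)
    show "shift G (inv a) x \<in> shift_orbit x" if "a \<in> carrier G" for a
      using that by (auto simp: shift_orbit_def)
    fix a b assume a: "a \<in> carrier G" and b: "b \<in> carrier G"
      and eq: "shift G (inv a) x = shift G (inv b) x"
    have "shift G (a \<otimes> inv b) x = shift G a (shift G (inv a) x)"
      using a b eq by (simp add: shift_shift)
    also have "\<dots> = x"
      using a assms(1) by (simp add: shift_shift_inv)
    finally show "a \<otimes> inv b \<in> stabilizer x"
      using a b by (simp add: stabilizer_def)
  qed
  then show ?thesis
    using subgroup_stabilizer[OF assms(1)] by (simp add: finite_index_def)
qed

lemma periodic_if_invariant:
  assumes "finite_index K" "\<And>k. k \<in> K \<Longrightarrow> shift G k z = z"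
  shows "periodic G z"
proof -
  obtain R where R: "finite R" "R \<subseteq> carrier G" "\<And>g. g \<in> carrier G \<Longrightarrow> \<exists>k\<in>K. \<exists>r\<in>R. g = k \<otimes> r"
    using finite_index_transversal[OF assms(1)] by blast
  have K: "subgroup K G"
    using assms(1) by (simp add: finite_index_def)
  have "shift G g z \<in> (\<lambda>r. shift G (inv r) z) ` R" if g: "g \<in> carrier G" for g
  proof -
    obtain k r where kr: "k \<in> K" "r \<in> R" "inv g = k \<otimes> r"
      using R(3)[of "inv g"] g by blast
    have k: "k \<in> carrier G" "inv k \<in> K"
      using kr(1) K by (auto dest: subgroup.subset subgroup.m_inv_closed)
    have "g = inv r \<otimes> inv k"
      using kr k g R(2) by (metis inv_inv inv_closed inv_mult_group subsetD)
    then have "shift G g z = shift G (inv r) (shift G (inv k) z)"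
      using k kr(2) R(2) by (auto simp: shift_shift)
    then show ?thesis
      using assms(2)[OF k(2)] kr(2) by simp
  qed
  then have "shift_orbit z \<subseteq> (\<lambda>r. shift G (inv r) z) ` R"
    by (auto simp: shift_orbit_def)
  then show ?thesis
    using R(1) finite_surj by (auto simp: periodic_iff_finite_shift_orbit)
qed

section \<open>Density of periodic configurations\<close>

lemma strongly_irreducibleE:
  assumes "strongly_irreducible G X"
  obtains \<Delta> where "finite \<Delta>" "\<Delta> \<subseteq> carrier G"
    "\<And>\<Omega>1 \<Omega>2 x1 x2. finite \<Omega>1 \<Longrightarrow> \<Omega>1 \<subseteq> carrier G \<Longrightarrow> finite \<Omega>2 \<Longrightarrow> \<Omega>2 \<subseteq> carrier G \<Longrightarrow>
      {a \<otimes> inv d | a d. a \<in> \<Omega>1 \<and> d \<in> \<Delta>} \<inter> \<Omega>2 = {} \<Longrightarrow> x1 \<in> X \<Longrightarrow> x2 \<in> X \<Longrightarrow>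
      \<exists>x\<in>X. (\<forall>h\<in>\<Omega>1. x h = x1 h) \<and> (\<forall>h\<in>\<Omega>2. x h = x2 h)"
proof -
  obtain \<Delta> where \<Delta>: "finite \<Delta> \<and> \<Delta> \<subseteq> carrier G \<and> (\<forall>\<Omega>1 \<Omega>2. finite \<Omega>1 \<and> \<Omega>1 \<subseteq> carrier G \<and>
      finite \<Omega>2 \<and> \<Omega>2 \<subseteq> carrier G \<and> {a \<otimes> inv d | a d. a \<in> \<Omega>1 \<and> d \<in> \<Delta>} \<inter> \<Omega>2 = {} \<longrightarrow>
      (\<forall>x1\<in>X. \<forall>x2\<in>X. \<exists>x\<in>X. (\<forall>h\<in>\<Omega>1. x h = x1 h) \<and> (\<forall>h\<in>\<Omega>2. x h = x2 h)))"
    using assms unfolding strongly_irreducible_def by (rule exE)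
  note glue = \<Delta>[THEN conjunct2, THEN conjunct2, rule_format]
  show thesis
  proof (rule that)
    show "finite \<Delta>" "\<Delta> \<subseteq> carrier G"
      using \<Delta> by (rule conjunct1, rule conjunct1[OF conjunct2])
    fix \<Omega>1 \<Omega>2 x1 x2
    assume "finite \<Omega>1" "\<Omega>1 \<subseteq> carrier G" "finite \<Omega>2" "\<Omega>2 \<subseteq> carrier G"
      "{a \<otimes> inv d | a d. a \<in> \<Omega>1 \<and> d \<in> \<Delta>} \<inter> \<Omega>2 = {}" "x1 \<in> X" "x2 \<in> X"
    then show "\<exists>x\<in>X. (\<forall>h\<in>\<Omega>1. x h = x1 h) \<and> (\<forall>h\<in>\<Omega>2. x h = x2 h)"
      by (intro glue conjI)
  qed
qed

lemma finite_typeE: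
  assumes "finite_type G A X"
  obtains \<Omega> P where "finite \<Omega>" "\<Omega> \<subseteq> carrier G"
    "X = {x \<in> fullshift G A. \<forall>g\<in>carrier G. restrict (shift G g x) \<Omega> \<in> P}"
proof -
  obtain \<Omega> where "\<exists>P. finite \<Omega> \<and> \<Omega> \<subseteq> carrier G \<and> P \<subseteq> (\<Omega> \<rightarrow>\<^sub>E A) \<and>
      X = {x \<in> fullshift G A. \<forall>g\<in>carrier G. restrict (shift G g x) \<Omega> \<in> P}"
    using assms unfolding finite_type_def by (rule exE)
  then obtain P where P: "finite \<Omega> \<and> \<Omega> \<subseteq> carrier G \<and> P \<subseteq> (\<Omega> \<rightarrow>\<^sub>E A) \<and>
      X = {x \<in> fullshift G A. \<forall>g\<in>carrier G. restrict (shift G g x) \<Omega> \<in> P}"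
    by (rule exE)
  show thesis
    using P[THEN conjunct1] P[THEN conjunct2, THEN conjunct1]
      P[THEN conjunct2, THEN conjunct2, THEN conjunct2]
    by (rule that)
qed

lemma finite_type_memberI:
  assumes X: "X = {x \<in> fullshift G A. \<forall>g\<in>carrier G. restrict (shift G g x) \<Omega> \<in> P}"
    and \<Omega>: "\<Omega> \<subseteq> carrier G" and z: "z \<in> fullshift G A"
    and window: "\<And>a. a \<in> carrier G \<Longrightarrow> \<exists>y\<in>X. \<exists>b\<in>carrier G. \<forall>\<omega>\<in>\<Omega>. z (a \<otimes> \<omega>) = y (b \<otimes> \<omega>)"
  shows "z \<in> X"
proof -
  have "restrict (shift G g z) \<Omega> \<in> P" if g: "g \<in> carrier G" for g
  proof -
    obtain y b where y: "y \<in> X" "b \<in> carrier G" "\<forall>\<omega>\<in>\<Omega>. z (inv g \<otimes> \<omega>) = y (b \<otimes> \<omega>)"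
      using window[of "inv g"] g by auto
    have "restrict (shift G g z) \<Omega> = restrict (shift G (inv b) y) \<Omega>"
      using y \<Omega> g by (intro restrict_ext) (auto simp: shift_apply)
    moreover have "restrict (shift G (inv b) y) \<Omega> \<in> P"
      using y X by auto
    ultimately show ?thesis
      by simp
  qed
  then show ?thesis
    using X z by auto
qed

text \<open>
  Repeats \<open>w\<close> on \<open>F\<close> along the translates \<open>k F\<close>, \<open>k \<in> K\<close>, and equals \<open>y\<close> elsewhere; the
  choice of \<open>k\<close> is unambiguous once \<open>K\<close> acts freely on \<open>F\<close> (locale \<open>free_translation\<close>).
\<close>
definition periodic_patch :: "'a set \<Rightarrow> 'a set \<Rightarrow> ('a \<Rightarrow> 'c) \<Rightarrow> ('a \<Rightarrow> 'c) \<Rightarrow> 'a \<Rightarrow> 'c" where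
  "periodic_patch K F w y h =
    (if h \<in> carrier G then
       if \<exists>k\<in>K. inv k \<otimes> h \<in> F then w (inv (SOME k. k \<in> K \<and> inv k \<otimes> h \<in> F) \<otimes> h) else y h
     else undefined)"

end

locale free_translation = group G for G :: "('a, 'b) monoid_scheme" (structure) +
  fixes K F :: "'a set"
  assumes K: "subgroup K G" and F: "F \<subseteq> carrier G"
    and free: "\<And>k f. k \<in> K \<Longrightarrow> f \<in> F \<Longrightarrow> k \<otimes> f \<in> F \<Longrightarrow> k = \<one>"
begin

lemma periodic_patch_mult:
  assumes k: "k \<in> K" and f: "f \<in> F"
  shows "periodic_patch K F w y (k \<otimes> f) = w f"
proof -
  have kc: "k \<in> carrier G" and fc: "f \<in> carrier G"
    using k f K F by (auto dest: subgroup.subset)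
  define k' where "k' = (SOME k'. k' \<in> K \<and> inv k' \<otimes> (k \<otimes> f) \<in> F)"
  have ex: "k \<in> K \<and> inv k \<otimes> (k \<otimes> f) \<in> F"
    using k f kc fc by (simp add: m_assoc[symmetric])
  then have k': "k' \<in> K" "inv k' \<otimes> (k \<otimes> f) \<in> F"
    using someI[of "\<lambda>k'. k' \<in> K \<and> inv k' \<otimes> (k \<otimes> f) \<in> F" k] unfolding k'_def by auto
  have k'c: "k' \<in> carrier G"
    using k' K by (auto dest: subgroup.subset)
  have "inv k' \<otimes> k \<in> K"
    using k k' K by (auto intro: subgroup.m_closed subgroup.m_inv_closed)
  moreover have "(inv k' \<otimes> k) \<otimes> f \<in> F"
    using k'(2) k'c kc fc by (simp add: m_assoc)
  ultimately have "inv k' \<otimes> k = \<one>"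
    using free f by blast
  then have "inv k' \<otimes> (k \<otimes> f) = f"
    using k'c kc fc by (simp add: m_assoc[symmetric])
  moreover have "\<exists>k''\<in>K. inv k'' \<otimes> (k \<otimes> f) \<in> F"
    using ex by blast
  ultimately show ?thesis
    using kc fc unfolding periodic_patch_def k'_def[symmetric] by simp
qed

lemma periodic_patch_outside:
  "h \<in> carrier G \<Longrightarrow> (\<And>k. k \<in> K \<Longrightarrow> inv k \<otimes> h \<notin> F) \<Longrightarrow> periodic_patch K F w y h = y h"
  by (auto simp: periodic_patch_def)

lemma periodic_patch_cases:
  assumes "h \<in> carrier G"
  obtains (translate) k f where "k \<in> K" "f \<in> F" "h = k \<otimes> f"
  | (outside) "\<And>k. k \<in> K \<Longrightarrow> inv k \<otimes> h \<notin> F"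
proof (cases "\<exists>k\<in>K. inv k \<otimes> h \<in> F")
  case True
  then obtain k where k: "k \<in> K" "inv k \<otimes> h \<in> F"
    by blast
  moreover have "k \<in> carrier G"
    using k K by (simp add: subgroup.mem_carrier)
  ultimately have "h = k \<otimes> (inv k \<otimes> h)"
    using assms by (simp add: m_assoc[symmetric])
  then show thesis
    using k translate by blast
qed (use outside in blast)

lemma periodic_patch_in_fullshift:
  assumes "w \<in> fullshift G A" "y \<in> fullshift G A"
  shows "periodic_patch K F w y \<in> fullshift G A"
proof -
  have w: "w f \<in> A" and y: "y h \<in> A" if "f \<in> carrier G" "h \<in> carrier G" for f h
    using assms that unfolding fullshift_def by (auto intro: PiE_mem)
  have "periodic_patch K F w y h \<in> A" if h: "h \<in> carrier G" for h
    using h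
  proof (cases rule: periodic_patch_cases)
    case (translate k f)
    then show ?thesis
      using periodic_patch_mult[OF translate(1,2), of w y] w F by auto
  next
    case outside
    then show ?thesis
      using periodic_patch_outside[OF h, of w y] y h by auto
  qed
  then show ?thesis
    by (auto simp: fullshift_def periodic_patch_def)
qed

lemma periodic_patch_invariant:
  assumes y: "\<And>k. k \<in> K \<Longrightarrow> shift G k y = y" and k: "k \<in> K"
  shows "shift G k (periodic_patch K F w y) = periodic_patch K F w y"
proof
  fix h
  have kc: "k \<in> carrier G" "inv k \<in> K"
    using k K by (auto dest: subgroup.subset subgroup.m_inv_closed)
  show "shift G k (periodic_patch K F w y) h = periodic_patch K F w y h"
  proof (cases "h \<in> carrier G")
    case False
    then show ?thesis
      by (simp add: shift_def periodic_patch_def)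
  next
    case h: True
    then show ?thesis
    proof (cases rule: periodic_patch_cases)
      case (translate k' f)
      have "k' \<in> carrier G" "f \<in> carrier G"
        using translate K F by (auto simp: subgroup.mem_carrier)
      then have "inv k \<otimes> h = (inv k \<otimes> k') \<otimes> f"
        using translate(3) kc by (simp add: m_assoc)
      moreover have "inv k \<otimes> k' \<in> K"
        using kc translate(1) K by (simp add: subgroup.m_closed)
      ultimately show ?thesis
        using translate h periodic_patch_mult[of _ f w y] by (simp add: shift_apply)
    next
      case outside
      have "inv k' \<otimes> (inv k \<otimes> h) \<notin> F" if "k' \<in> K" for k'
      proof -
        have "inv k' \<otimes> (inv k \<otimes> h) = inv (k \<otimes> k') \<otimes> h"
          using that kc h K by (simp add: m_assoc inv_mult_group subgroup.mem_carrier)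
        then show ?thesis
          using outside[of "k \<otimes> k'"] that k K by (simp add: subgroup.m_closed)
      qed
      then have "periodic_patch K F w y (inv k \<otimes> h) = y (inv k \<otimes> h)"
        using kc h by (intro periodic_patch_outside) auto
      also have "\<dots> = y h"
        using y[OF k] h by (metis shift_apply)
      finally show ?thesis
        using periodic_patch_outside[OF h outside, of w y] h by (simp add: shift_apply)
    qed
  qed
qed

text \<open>
  Off the translates of \<open>C\<close> the patch agrees with \<open>y\<close>, and a window \<open>a \<Omega>\<close> meeting a translate
  \<open>k C\<close> lies inside \<open>k F\<close>, where the patch is a translate of \<open>w\<close>; so every window is seen
  in \<open>w\<close> or in \<open>y\<close>.
\<close>
lemma periodic_patch_in_finite_type:
  assumes X: "X = {x \<in> fullshift G A. \<forall>g\<in>carrier G. restrict (shift G g x) \<Omega> \<in> P}"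
    and \<Omega>: "\<Omega> \<subseteq> carrier G" and w: "w \<in> X" and y: "y \<in> X"
    and y_inv: "\<And>k. k \<in> K \<Longrightarrow> shift G k y = y"
    and C: "\<And>c \<omega> \<omega>'. c \<in> C \<Longrightarrow> \<omega> \<in> \<Omega> \<Longrightarrow> \<omega>' \<in> \<Omega> \<Longrightarrow> c \<otimes> inv \<omega> \<otimes> \<omega>' \<in> F"
    and w_y: "\<And>f. f \<in> F - C \<Longrightarrow> w f = y f"
  shows "periodic_patch K F w y \<in> X"
proof -
  let ?z = "periodic_patch K F w y"
  have Kc: "k \<in> carrier G" if "k \<in> K" for k
    using that K by (simp add: subgroup.mem_carrier)
  have z_y: "?z h = y h" if h: "h \<in> carrier G" and off: "\<And>k. k \<in> K \<Longrightarrow> inv k \<otimes> h \<notin> C" for h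
    using h
  proof (cases rule: periodic_patch_cases)
    case (translate k f)
    have "f = inv k \<otimes> h"
      using translate Kc F by (auto simp: m_assoc[symmetric])
    then have "f \<in> F - C"
      using translate(2) off[OF translate(1)] by simp
    then have "?z h = y f"
      using translate periodic_patch_mult[of k f w y] w_y by simp
    also have "\<dots> = shift G k y h"
      using \<open>f = inv k \<otimes> h\<close> h by (simp add: shift_apply)
    finally show ?thesis
      using y_inv translate(1) by simp
  next
    case outside
    then show ?thesis
      using periodic_patch_outside[OF h, of w y] by simp
  qed
  show ?thesis
  proof (rule finite_type_memberI[OF X \<Omega>])
    show "?z \<in> fullshift G A"
      using periodic_patch_in_fullshift w y X by blast
    fix a assume a: "a \<in> carrier G"
    show "\<exists>u\<in>X. \<exists>b\<in>carrier G. \<forall>\<omega>\<in>\<Omega>. ?z (a \<otimes> \<omega>) = u (b \<otimes> \<omega>)"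
    proof (cases "\<exists>k\<in>K. \<exists>\<omega>\<in>\<Omega>. inv k \<otimes> (a \<otimes> \<omega>) \<in> C")
      case True
      then obtain k \<omega> where k: "k \<in> K" and \<omega>: "\<omega> \<in> \<Omega>" and c: "inv k \<otimes> (a \<otimes> \<omega>) \<in> C"
        by blast
      have "?z (a \<otimes> \<omega>') = w ((inv k \<otimes> a) \<otimes> \<omega>')" if \<omega>': "\<omega>' \<in> \<Omega>" for \<omega>'
      proof -
        have in_F: "inv k \<otimes> (a \<otimes> \<omega>) \<otimes> inv \<omega> \<otimes> \<omega>' \<in> F"
          using C[OF c \<omega> \<omega>'] .
        have "inv k \<otimes> (a \<otimes> \<omega>) \<otimes> inv \<omega> \<otimes> \<omega>' = (inv k \<otimes> a) \<otimes> \<omega>'"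
          using Kc[OF k] a \<omega> \<omega>' \<Omega> by (auto simp: m_assoc)
        moreover have "a \<otimes> \<omega>' = k \<otimes> ((inv k \<otimes> a) \<otimes> \<omega>')"
          using Kc[OF k] a \<omega>' \<Omega> by (auto simp: m_assoc[symmetric])
        ultimately show ?thesis
          using periodic_patch_mult[OF k in_F, of w y] by simp
      qed
      moreover have "inv k \<otimes> a \<in> carrier G"
        using Kc[OF k] a by simp
      ultimately show ?thesis
        using w by blast
    next
      case False
      then have "?z (a \<otimes> \<omega>) = y (a \<otimes> \<omega>)" if "\<omega> \<in> \<Omega>" for \<omega>
        using that a \<Omega> by (intro z_y) auto
      then show ?thesis
        using y a by blast
    qed
  qed
qed

end

context group
begin

text \<open>
  Glue \<open>x\<close> on \<open>E\<close> to the periodic \<open>y\<close> outside the \<open>\<Delta>\<close>-neighbourhood \<open>C\<close> of \<open>E\<close>, then make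
  the resulting pattern on the \<open>\<Omega>\<close>-neighbourhood \<open>F\<close> of \<open>C\<close> periodic along a finite-index
  subgroup of the stabilizer of \<open>y\<close>; residual finiteness lets that subgroup act freely on \<open>F\<close>.
\<close>
lemma periodic_dense_if_strongly_irreducible:
  assumes rf: "residually_finite G" and X: "subshift G A X" "finite_type G A X"
    and si: "strongly_irreducible G X" and y: "y \<in> X" "periodic G y"
    and x: "x \<in> X" and E: "finite E" "E \<subseteq> carrier G"
  obtains z where "z \<in> X" "periodic G z" "\<forall>h\<in>E. z h = x h"
proof -
  obtain \<Omega> P where \<Omega>: "finite \<Omega>" "\<Omega> \<subseteq> carrier G"
    and X_eq: "X = {x \<in> fullshift G A. \<forall>g\<in>carrier G. restrict (shift G g x) \<Omega> \<in> P}"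
    by (rule finite_typeE[OF X(2)])
  obtain \<Delta> where \<Delta>: "finite \<Delta>" "\<Delta> \<subseteq> carrier G"
    and glue: "\<And>\<Omega>1 \<Omega>2 x1 x2. finite \<Omega>1 \<Longrightarrow> \<Omega>1 \<subseteq> carrier G \<Longrightarrow> finite \<Omega>2 \<Longrightarrow> \<Omega>2 \<subseteq> carrier G \<Longrightarrow>
      {a \<otimes> inv d | a d. a \<in> \<Omega>1 \<and> d \<in> \<Delta>} \<inter> \<Omega>2 = {} \<Longrightarrow> x1 \<in> X \<Longrightarrow> x2 \<in> X \<Longrightarrow>
      \<exists>x\<in>X. (\<forall>h\<in>\<Omega>1. x h = x1 h) \<and> (\<forall>h\<in>\<Omega>2. x h = x2 h)"
    by (rule strongly_irreducibleE[OF si]) (rule that)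
  have y_full: "y \<in> fullshift G A"
    using X(1) y(1) by (auto simp: subshift_def)
  define C where "C = E \<union> {a \<otimes> inv d | a d. a \<in> E \<and> d \<in> \<Delta>}"
  define F where "F = C \<union> (\<lambda>(c, \<omega>, \<omega>'). c \<otimes> inv \<omega> \<otimes> \<omega>') ` (C \<times> \<Omega> \<times> \<Omega>)"
  have C: "finite C" "C \<subseteq> carrier G"
    using E \<Delta> by (auto simp: C_def finite_image_set2)
  have F: "finite F" "F \<subseteq> carrier G"
    using C \<Omega> by (auto simp: F_def intro!: m_closed inv_closed)
  obtain w where w: "w \<in> X" "\<forall>h\<in>E. w h = x h" "\<forall>h\<in>F - C. w h = y h"
  proof -
    have "{a \<otimes> inv d | a d. a \<in> E \<and> d \<in> \<Delta>} \<inter> (F - C) = {}"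
      unfolding C_def by blast
    moreover have "finite (F - C)" "F - C \<subseteq> carrier G"
      using F by auto
    ultimately have "\<exists>w\<in>X. (\<forall>h\<in>E. w h = x h) \<and> (\<forall>h\<in>F - C. w h = y h)"
      using glue[OF E] x y(1) by blast
    then show thesis
      using that by blast
  qed
  define S where "S = (\<lambda>(f1, f2). f1 \<otimes> inv f2) ` (F \<times> F) - {\<one>}"
  have "finite S" "S \<subseteq> carrier G - {\<one>}"
    using F by (auto simp: S_def)
  then obtain K where K: "finite_index K" "K \<subseteq> stabilizer y" "K \<inter> S = {}"
    using finite_index_avoiding[OF rf _ _ finite_index_stabilizer[OF y_full y(2)]] by blast
  have K_sub: "subgroup K G"
    using K(1) by (simp add: finite_index_def)
  have free: "k = \<one>" if "k \<in> K" "f \<in> F" "k \<otimes> f \<in> F" for k f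
  proof -
    have "k = (k \<otimes> f) \<otimes> inv f"
      using that K_sub F by (auto simp: m_assoc subgroup.mem_carrier)
    then have "k \<in> (\<lambda>(f1, f2). f1 \<otimes> inv f2) ` (F \<times> F)"
      using that by (intro image_eqI[where x="(k \<otimes> f, f)"]) auto
    then show ?thesis
      using K(3) that(1) by (auto simp: S_def)
  qed
  have y_inv: "shift G k y = y" if "k \<in> K" for k
    using K(2) that by (auto simp: stabilizer_def)
  interpret patch: free_translation G K F
    using K_sub F(2) free
    by (intro free_translation.intro is_group free_translation_axioms.intro) auto
  define z where "z = periodic_patch K F w y"
  show thesis
  proof
    have F_windows: "c \<otimes> inv \<omega> \<otimes> \<omega>' \<in> F" if "c \<in> C" "\<omega> \<in> \<Omega>" "\<omega>' \<in> \<Omega>" for c \<omega> \<omega>'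
      unfolding F_def using that by (intro UnI2 image_eqI[where x="(c, \<omega>, \<omega>')"]) auto
    show "z \<in> X"
      unfolding z_def
      by (rule patch.periodic_patch_in_finite_type[OF X_eq \<Omega>(2) w(1) y(1) y_inv F_windows
            w(3)[rule_format]])
    show "periodic G z"
      using periodic_if_invariant[OF K(1)] patch.periodic_patch_invariant[OF y_inv]
      unfolding z_def by blast
    show "\<forall>h\<in>E. z h = x h"
    proof
      fix h assume h: "h \<in> E"
      then have "h \<in> F" "h \<in> carrier G"
        using E by (auto simp: F_def C_def)
      then have "z (\<one> \<otimes> h) = w h"
        unfolding z_def using patch.periodic_patch_mult[OF subgroup.one_closed[OF K_sub]]
        by blast
      then show "z h = x h"
        using w(2) h \<open>h \<in> carrier G\<close> by simp
    qed
  qed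
qed

end

section \<open>Mixtures of uniform distributions on finite sets\<close>

definition uniform_mixture :: "'x set \<Rightarrow> 'x set set \<Rightarrow> (nat \<Rightarrow> 'x set) \<Rightarrow> 'x measure" where
  "uniform_mixture \<Omega> M Y = measure_of \<Omega> M
     (\<lambda>B. \<Sum>i. ennreal ((1/2)^Suc i / real (card (Y i))) * of_nat (card (Y i \<inter> B)))"

lemma
  assumes "sigma_algebra \<Omega> M"
  shows sets_uniform_mixture: "sets (uniform_mixture \<Omega> M Y) = M"
    and space_uniform_mixture: "space (uniform_mixture \<Omega> M Y) = \<Omega>"
proof -
  interpret sigma_algebra \<Omega> M by fact
  show "sets (uniform_mixture \<Omega> M Y) = M" "space (uniform_mixture \<Omega> M Y) = \<Omega>"
    using space_closed sigma_sets_eq by (simp_all add: uniform_mixture_def)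
qed

lemma emeasure_uniform_mixture:
  assumes M: "sigma_algebra \<Omega> M" and Y: "\<And>i. finite (Y i)" and B: "B \<in> M"
  shows "emeasure (uniform_mixture \<Omega> M Y) B
    = (\<Sum>i. ennreal ((1/2)^Suc i / real (card (Y i))) * of_nat (card (Y i \<inter> B)))"
proof -
  define c where "c i = ennreal ((1/2)^Suc i / real (card (Y i)))" for i
  define \<nu> where "\<nu> = density (count_space UNIV) (\<lambda>x. \<Sum>i. c i * indicator (Y i) x)"
  have \<nu>: "emeasure \<nu> B = (\<Sum>i. c i * of_nat (card (Y i \<inter> B)))" for B
  proof -
    have "emeasure \<nu> B = (\<integral>\<^sup>+ x. (\<Sum>i. c i * indicator (Y i) x) * indicator B x \<partial>count_space UNIV)"
      unfolding \<nu>_def by (rule emeasure_density) auto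
    also have "\<dots> = (\<integral>\<^sup>+ x. (\<Sum>i. c i * indicator (Y i \<inter> B) x) \<partial>count_space UNIV)"
      by (rule nn_integral_cong) (simp add: indicator_inter_arith mult.assoc[symmetric])
    also have "\<dots> = (\<Sum>i. \<integral>\<^sup>+ x. c i * indicator (Y i \<inter> B) x \<partial>count_space UNIV)"
      by (rule nn_integral_suminf) auto
    also have "\<dots> = (\<Sum>i. c i * of_nat (card (Y i \<inter> B)))"
      by (rule suminf_cong) (simp add: nn_integral_cmult_indicator Y)
    finally show ?thesis .
  qed
  have "countably_additive M (emeasure \<nu>)"
    unfolding countably_additive_def
    by (intro allI impI suminf_emeasure) (auto simp: \<nu>_def)
  then have "emeasure (measure_of \<Omega> M (emeasure \<nu>)) B = emeasure \<nu> B"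
    by (intro emeasure_measure_of_sigma[OF M _ _ B]) (simp add: positive_def)
  moreover have "uniform_mixture \<Omega> M Y = measure_of \<Omega> M (emeasure \<nu>)"
    unfolding uniform_mixture_def \<nu> c_def ..
  ultimately show ?thesis
    using \<nu> by (simp add: c_def)
qed

lemma prob_space_uniform_mixture:
  assumes M: "sigma_algebra \<Omega> M"
    and Y: "\<And>i. finite (Y i)" "\<And>i. Y i \<noteq> {}" "\<And>i. Y i \<subseteq> \<Omega>"
  shows "prob_space (uniform_mixture \<Omega> M Y)"
proof
  have "ennreal ((1/2)^Suc i / real (card (Y i))) * of_nat (card (Y i \<inter> \<Omega>)) = ennreal ((1/2)^Suc i)"
    for i
  proof -
    have "card (Y i) > 0"
      using Y(1,2) by (simp add: card_gt_0_iff)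
    then show ?thesis
      using Int_absorb2[OF Y(3)]
      by (simp add: ennreal_of_nat_eq_real_of_nat ennreal_mult[symmetric])
  qed
  moreover have "\<Omega> \<in> M"
    using sets.top[of "uniform_mixture \<Omega> M Y"] M
    by (simp add: sets_uniform_mixture space_uniform_mixture)
  ultimately have "emeasure (uniform_mixture \<Omega> M Y) \<Omega> = (\<Sum>i. ennreal ((1/2)^Suc i))"
    using emeasure_uniform_mixture[OF M Y(1)] by simp
  also have "\<dots> = ennreal (\<Sum>i. (1/2::real)^Suc i)"
    using power_half_series by (intro suminf_ennreal2) (auto simp: sums_iff)
  also have "\<dots> = 1"
    using power_half_series sums_unique by fastforce
  finally show "emeasure (uniform_mixture \<Omega> M Y) (space (uniform_mixture \<Omega> M Y)) = 1"
    by (simp add: space_uniform_mixture[OF M])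
qed

section \<open>Subshifts over a finite alphabet\<close>

locale compact_subshift = group G for G :: "('a, 'b) monoid_scheme" (structure) +
  fixes A :: "'c set" and X :: "('a \<Rightarrow> 'c) set"
  assumes finite_alphabet: "finite A" and subshift: "subshift G A X"
begin

abbreviation subshift_topology :: "('a \<Rightarrow> 'c) topology" where
  "subshift_topology \<equiv> subtopology (prodiscrete G A) X"

lemma subshift_subset_fullshift: "X \<subseteq> fullshift G A"
  using subshift by (simp add: subshift_def)

lemma shift_in_subshift: "g \<in> carrier G \<Longrightarrow> x \<in> X \<Longrightarrow> shift G g x \<in> X"
  using subshift by (simp add: subshift_def)

lemma subshift_in_alphabet: "x \<in> X \<Longrightarrow> g \<in> carrier G \<Longrightarrow> x g \<in> A"
  using subshift_subset_fullshift by (auto simp: fullshift_def intro: PiE_mem)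

lemma subshift_undefined: "x \<in> X \<Longrightarrow> g \<notin> carrier G \<Longrightarrow> x g = undefined"
  using subshift_subset_fullshift by (auto simp: fullshift_def intro: PiE_arb)

lemma topspace_prodiscrete_Int_subshift [simp]: "topspace (prodiscrete G A) \<inter> X = X"
  using subshift_subset_fullshift by (simp add: topspace_prodiscrete Int_absorb1)

lemma topspace_subshift_topology: "topspace subshift_topology = X"
  by simp

lemma compact_space_subshift_topology: "compact_space subshift_topology"
proof -
  have "closedin (prodiscrete G A) X"
    using subshift by (simp add: subshift_def)
  then have "compactin (prodiscrete G A) X"
    using closedin_compact_space compact_space_prodiscrete[OF finite_alphabet] by blast
  then show ?thesis
    by (rule compact_space_subtopology)
qed

lemma Hausdorff_space_subshift_topology: "Hausdorff_space subshift_topology"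
  by (simp add: Hausdorff_space_prodiscrete Hausdorff_space_subtopology)

lemma openin_subshift_contains_cylinder:
  assumes "openin subshift_topology U" "u \<in> U"
  obtains E where "finite E" "E \<subseteq> carrier G" "\<And>v. v \<in> X \<Longrightarrow> (\<forall>h\<in>E. v h = u h) \<Longrightarrow> v \<in> U"
proof -
  obtain V where V: "openin (prodiscrete G A) V" "U = V \<inter> X"
    using assms(1) by (auto simp: openin_subtopology)
  obtain E where "finite E" "E \<subseteq> carrier G"
    "\<And>v. v \<in> fullshift G A \<Longrightarrow> (\<forall>h\<in>E. v h = u h) \<Longrightarrow> v \<in> V"
    using openin_prodiscrete_contains_cylinder[OF V(1)] assms(2) V(2) by blast
  then show thesis
    using that V(2) subshift_subset_fullshift by blast
qed

lemma cellular_automaton_into: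
  assumes "cellular_automaton G A X \<tau>" "x \<in> X"
  shows "\<tau> x \<in> X"
proof -
  have "\<tau> ` X \<subseteq> X"
    using continuous_map_image_subset_topspace[of subshift_topology subshift_topology \<tau>] assms(1)
    unfolding cellular_automaton_def topspace_subshift_topology by blast
  then show ?thesis
    using assms(2) by blast
qed

definition Fix :: "'a set \<Rightarrow> ('a \<Rightarrow> 'c) set" where
  "Fix H = {x \<in> X. \<forall>h\<in>H. shift G h x = x}"

lemma finite_Fix:
  assumes "finite_index H"
  shows "finite (Fix H)"
proof -
  obtain R where R: "finite R" "R \<subseteq> carrier G" "\<And>g. g \<in> carrier G \<Longrightarrow> \<exists>h\<in>H. \<exists>r\<in>R. g = h \<otimes> r"
    using finite_index_transversal[OF assms] by blast
  have H: "subgroup H G"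
    using assms by (simp add: finite_index_def)
  have "inj_on (\<lambda>x. restrict x R) (Fix H)"
  proof
    fix x x' assume x: "x \<in> Fix H" and x': "x' \<in> Fix H" and eq: "restrict x R = restrict x' R"
    have on_orbit: "u g = u r" if u: "u \<in> Fix H" and "h \<in> H" "r \<in> R" "g = h \<otimes> r" for u g h r
    proof -
      have "h \<in> carrier G" "r \<in> carrier G"
        using that H R(2) by (auto simp: subgroup.mem_carrier)
      then have "shift G h u g = u r"
        using that by (simp add: shift_apply m_assoc[symmetric])
      then show ?thesis
        using u \<open>h \<in> H\<close> by (simp add: Fix_def)
    qed
    show "x = x'"
    proof
      fix g
      show "x g = x' g"
      proof (cases "g \<in> carrier G")
        case True
        then obtain h r where hr: "h \<in> H" "r \<in> R" "g = h \<otimes> r"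
          using R(3) by blast
        have "x r = x' r"
          using fun_cong[OF eq, of r] hr(2) by simp
        then show ?thesis
          using on_orbit[OF x hr] on_orbit[OF x' hr] by simp
      next
        case False
        then show ?thesis
          using x x' by (simp add: Fix_def subshift_undefined)
      qed
    qed
  qed
  moreover have "(\<lambda>x. restrict x R) ` Fix H \<subseteq> R \<rightarrow>\<^sub>E A"
    using R(2) by (auto simp: Fix_def restrict_PiE_iff subshift_in_alphabet)
  moreover have "finite (R \<rightarrow>\<^sub>E A)"
    using R(1) finite_alphabet by (simp add: finite_PiE)
  ultimately show ?thesis
    using inj_on_finite by blast
qed

lemma periodic_in_Fix_stabilizer:
  assumes "x \<in> X" "periodic G x"
  shows "x \<in> Fix (stabilizer x)" "finite_index (stabilizer x)"
  using assms subshift_subset_fullshift finite_index_stabilizer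
  by (auto simp: Fix_def stabilizer_def)

lemma cellular_automaton_image_Fix:
  assumes "cellular_automaton G A X \<tau>" "inj_on \<tau> X" "finite_index H"
  shows "\<tau> ` Fix H = Fix H"
proof (rule endo_inj_surj)
  have "H \<subseteq> carrier G"
    using assms(3) by (auto simp: finite_index_def subgroup.mem_carrier)
  show "\<tau> ` Fix H \<subseteq> Fix H"
  proof
    fix y assume "y \<in> \<tau> ` Fix H"
    then obtain x where x: "x \<in> X" "\<forall>h\<in>H. shift G h x = x" and y: "y = \<tau> x"
      by (auto simp: Fix_def)
    have "shift G h y = y" if h: "h \<in> H" for h
    proof -
      have "\<tau> (shift G h x) = shift G h (\<tau> x)"
        using assms(1) x(1) h \<open>H \<subseteq> carrier G\<close> by (auto simp: cellular_automaton_def)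
      then show ?thesis
        using x(2) h y by simp
    qed
    then show "y \<in> Fix H"
      using cellular_automaton_into[OF assms(1) x(1)] y by (simp add: Fix_def)
  qed
  show "finite (Fix H)" "inj_on \<tau> (Fix H)"
    using finite_Fix[OF assms(3)] inj_on_subset[OF assms(2)] by (auto simp: Fix_def)
qed

lemma cellular_automaton_compose:
  assumes "cellular_automaton G A X \<sigma>" "cellular_automaton G A X \<tau>"
  shows "cellular_automaton G A X (restrict (\<sigma> \<circ> \<tau>) X)"
proof -
  have "continuous_map subshift_topology subshift_topology (\<sigma> \<circ> \<tau>)"
    using assms continuous_map_compose by (auto simp: cellular_automaton_def)
  then have "continuous_map subshift_topology subshift_topology (restrict (\<sigma> \<circ> \<tau>) X)"
    by (rule continuous_map_eq) (simp add: topspace_subshift_topology)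
  moreover have "restrict (\<sigma> \<circ> \<tau>) X (shift G g x) = shift G g (restrict (\<sigma> \<circ> \<tau>) X x)"
    if "g \<in> carrier G" "x \<in> X" for g x
    using that assms cellular_automaton_into[OF assms(2) that(2)] shift_in_subshift
    by (auto simp: cellular_automaton_def)
  ultimately show ?thesis
    by (simp add: cellular_automaton_def)
qed

lemma cellular_automaton_id: "cellular_automaton G A X (restrict id X)"
proof -
  have "continuous_map subshift_topology subshift_topology (restrict id X)"
    by (rule continuous_map_eq[OF continuous_map_id]) (simp add: topspace_subshift_topology)
  then show ?thesis
    using shift_in_subshift by (simp add: cellular_automaton_def)
qed

text \<open>A continuous bijection of a compact Hausdorff space is a homeomorphism.\<close>
lemma cellular_automaton_inv_into:
  assumes ca: "cellular_automaton G A X \<sigma>" and bij: "bij_betw \<sigma> X X"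
  shows "cellular_automaton G A X (restrict (inv_into X \<sigma>) X)"
proof -
  have cont: "continuous_map subshift_topology subshift_topology \<sigma>"
    using ca by (simp add: cellular_automaton_def)
  have "\<sigma> ` topspace subshift_topology = topspace subshift_topology"
    "inj_on \<sigma> (topspace subshift_topology)"
    using bij unfolding topspace_subshift_topology bij_betw_def by auto
  then have "homeomorphic_map subshift_topology subshift_topology \<sigma>"
    by (intro bijective_closed_imp_homeomorphic_map[OF cont] continuous_imp_closed_map[OF cont]
        compact_space_subshift_topology Hausdorff_space_subshift_topology)
  then obtain \<rho> where \<rho>: "homeomorphic_maps subshift_topology subshift_topology \<sigma> \<rho>"
    using homeomorphic_map_maps by blast
  then have \<rho>_cont: "continuous_map subshift_topology subshift_topology \<rho>"
    and \<sigma>\<rho>: "\<And>y. y \<in> X \<Longrightarrow> \<sigma> (\<rho> y) = y"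
    unfolding homeomorphic_maps_def topspace_subshift_topology by blast+
  have \<rho>X: "\<rho> y \<in> X" if "y \<in> X" for y
    using continuous_map_image_subset_topspace[OF \<rho>_cont] that
    unfolding topspace_subshift_topology by blast
  have "continuous_map subshift_topology subshift_topology (restrict (inv_into X \<sigma>) X)"
  proof (rule continuous_map_eq[OF \<rho>_cont])
    fix y assume "y \<in> topspace subshift_topology"
    then have y: "y \<in> X"
      by (simp add: topspace_subshift_topology)
    have "inv_into X \<sigma> (\<sigma> (\<rho> y)) = \<rho> y"
      using bij \<rho>X[OF y] by (simp add: bij_betw_def inv_into_f_f)
    then show "\<rho> y = restrict (inv_into X \<sigma>) X y"
      using \<sigma>\<rho> y by simp
  qed
  moreover have "restrict (inv_into X \<sigma>) X (shift G g y) = shift G g (restrict (inv_into X \<sigma>) X y)"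
    if g: "g \<in> carrier G" and y: "y \<in> X" for g y
  proof -
    define x where "x = inv_into X \<sigma> y"
    have x: "x \<in> X" "\<sigma> x = y"
      using bij y unfolding x_def
      by (auto simp: bij_betw_inv_into_right bij_betw_def intro: inv_into_into)
    have "\<sigma> (shift G g x) = shift G g y"
      using ca g x by (auto simp: cellular_automaton_def)
    then have "inv_into X \<sigma> (shift G g y) = shift G g x"
      using bij shift_in_subshift[OF g x(1)] by (metis bij_betw_def inv_into_f_f)
    then show ?thesis
      using y g shift_in_subshift x_def by simp
  qed
  ultimately show ?thesis
    by (simp add: cellular_automaton_def)
qed

lemma Aut_simps:
  "carrier (Aut G A X) = {\<tau> \<in> extensional X. cellular_automaton G A X \<tau> \<and> bij_betw \<tau> X X}"
  "mult (Aut G A X) = (\<lambda>\<sigma> \<tau>. restrict (\<sigma> \<circ> \<tau>) X)"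
  "one (Aut G A X) = restrict id X"
  by (simp_all add: Aut_def)

lemma Aut_into: "\<sigma> \<in> carrier (Aut G A X) \<Longrightarrow> x \<in> X \<Longrightarrow> \<sigma> x \<in> X"
  by (auto simp: Aut_simps bij_betw_def)

lemma group_Aut: "group (Aut G A X)"
proof (rule groupI)
  fix \<sigma> \<tau> assume \<sigma>: "\<sigma> \<in> carrier (Aut G A X)" and \<tau>: "\<tau> \<in> carrier (Aut G A X)"
  have "bij_betw (\<sigma> \<circ> \<tau>) X X"
    using \<sigma> \<tau> bij_betw_trans by (auto simp: Aut_simps)
  then have "bij_betw (restrict (\<sigma> \<circ> \<tau>) X) X X"
    by (rule bij_betw_cong[THEN iffD1, rotated]) simp
  then show "\<sigma> \<otimes>\<^bsub>Aut G A X\<^esub> \<tau> \<in> carrier (Aut G A X)"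
    using \<sigma> \<tau> cellular_automaton_compose by (auto simp: Aut_simps)
next
  show "\<one>\<^bsub>Aut G A X\<^esub> \<in> carrier (Aut G A X)"
    using cellular_automaton_id by (auto simp: Aut_simps bij_betw_def inj_on_def)
next
  fix \<sigma> \<tau> \<rho> assume "\<sigma> \<in> carrier (Aut G A X)" "\<tau> \<in> carrier (Aut G A X)" "\<rho> \<in> carrier (Aut G A X)"
  then show "\<sigma> \<otimes>\<^bsub>Aut G A X\<^esub> \<tau> \<otimes>\<^bsub>Aut G A X\<^esub> \<rho> = \<sigma> \<otimes>\<^bsub>Aut G A X\<^esub> (\<tau> \<otimes>\<^bsub>Aut G A X\<^esub> \<rho>)"
    using Aut_into by (auto simp: Aut_simps)
next
  fix \<sigma> assume "\<sigma> \<in> carrier (Aut G A X)"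
  then show "\<one>\<^bsub>Aut G A X\<^esub> \<otimes>\<^bsub>Aut G A X\<^esub> \<sigma> = \<sigma>"
    using Aut_into by (auto simp: Aut_simps extensional_def)
next
  fix \<sigma> assume \<sigma>: "\<sigma> \<in> carrier (Aut G A X)"
  then have ca: "cellular_automaton G A X \<sigma>" and bij: "bij_betw \<sigma> X X"
    by (auto simp: Aut_simps)
  let ?\<tau> = "restrict (inv_into X \<sigma>) X"
  have "bij_betw ?\<tau> X X"
    using bij_betw_inv_into[OF bij] by (rule bij_betw_cong[THEN iffD1, rotated]) simp
  then have "?\<tau> \<in> carrier (Aut G A X)"
    using cellular_automaton_inv_into[OF ca bij] by (auto simp: Aut_simps)
  moreover have "?\<tau> \<otimes>\<^bsub>Aut G A X\<^esub> \<sigma> = \<one>\<^bsub>Aut G A X\<^esub>"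
    using bij Aut_into[OF \<sigma>] by (auto simp: Aut_simps bij_betw_def inv_into_f_f)
  ultimately show "\<exists>\<tau>\<in>carrier (Aut G A X). \<tau> \<otimes>\<^bsub>Aut G A X\<^esub> \<sigma> = \<one>\<^bsub>Aut G A X\<^esub>"
    by blast
qed

lemma Aut_mult_apply:
  "x \<in> X \<Longrightarrow> (\<sigma> \<otimes>\<^bsub>Aut G A X\<^esub> \<tau>) x = \<sigma> (\<tau> x)"
  by (simp add: Aut_simps)

lemma Aut_inv_apply:
  assumes "\<sigma> \<in> carrier (Aut G A X)" "x \<in> X"
  shows "(inv\<^bsub>Aut G A X\<^esub> \<sigma>) (\<sigma> x) = x"
proof -
  interpret Aut: group "Aut G A X"
    by (rule group_Aut)
  have "(inv\<^bsub>Aut G A X\<^esub> \<sigma> \<otimes>\<^bsub>Aut G A X\<^esub> \<sigma>) x = \<one>\<^bsub>Aut G A X\<^esub> x"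
    using assms(1) by simp
  then show ?thesis
    using assms(2) by (simp add: Aut_mult_apply Aut_simps(3))
qed

lemma Aut_image_Fix:
  "\<sigma> \<in> carrier (Aut G A X) \<Longrightarrow> finite_index H \<Longrightarrow> \<sigma> ` Fix H = Fix H"
  by (rule cellular_automaton_image_Fix) (auto simp: Aut_simps bij_betw_def)

lemma finite_index_Aut_fixing_Fix:
  assumes H: "finite_index H"
  shows "group.finite_index (Aut G A X) {\<tau> \<in> carrier (Aut G A X). \<forall>x\<in>Fix H. \<tau> x = x}"
proof -
  interpret Aut: group "Aut G A X"
    by (rule group_Aut)
  define N where "N = {\<tau> \<in> carrier (Aut G A X). \<forall>x\<in>Fix H. \<tau> x = x}"
  have Fix_X: "Fix H \<subseteq> X"
    by (auto simp: Fix_def)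
  have N: "subgroup N (Aut G A X)"
  proof (rule Aut.subgroupI)
    show "N \<subseteq> carrier (Aut G A X)"
      by (auto simp: N_def)
    show "N \<noteq> {}"
      using Aut.one_closed Fix_X by (force simp: N_def Aut_simps(3))
    fix \<sigma> \<tau> assume \<sigma>: "\<sigma> \<in> N" and \<tau>: "\<tau> \<in> N"
    show "inv\<^bsub>Aut G A X\<^esub> \<sigma> \<in> N"
      using \<sigma> Aut_inv_apply Fix_X by (force simp: N_def)
    show "\<sigma> \<otimes>\<^bsub>Aut G A X\<^esub> \<tau> \<in> N"
      using \<sigma> \<tau> Fix_X by (auto simp: N_def Aut_mult_apply)
  qed
  have "finite (rcosets\<^bsub>Aut G A X\<^esub> N)"
  proof (rule Aut.finite_rcosets_by_map[OF N, of "Fix H \<rightarrow>\<^sub>E Fix H" "\<lambda>\<tau>. restrict \<tau> (Fix H)"])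
    show "finite (Fix H \<rightarrow>\<^sub>E Fix H)"
      using finite_Fix[OF H] by (simp add: finite_PiE)
    show "restrict \<sigma> (Fix H) \<in> Fix H \<rightarrow>\<^sub>E Fix H" if "\<sigma> \<in> carrier (Aut G A X)" for \<sigma>
      using Aut_image_Fix[OF that H] by auto
    fix \<sigma> \<tau> assume \<sigma>: "\<sigma> \<in> carrier (Aut G A X)" and \<tau>: "\<tau> \<in> carrier (Aut G A X)"
      and eq: "restrict \<sigma> (Fix H) = restrict \<tau> (Fix H)"
    have "(\<sigma> \<otimes>\<^bsub>Aut G A X\<^esub> inv\<^bsub>Aut G A X\<^esub> \<tau>) x = x" if x: "x \<in> Fix H" for x
    proof -
      obtain x' where x': "x' \<in> Fix H" "x = \<tau> x'"
        using Aut_image_Fix[OF \<tau> H] x by blast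
      then have "(inv\<^bsub>Aut G A X\<^esub> \<tau>) x = x'"
        using Aut_inv_apply[OF \<tau>] Fix_X by auto
      moreover have "\<sigma> x' = \<tau> x'"
        using fun_cong[OF eq, of x'] x'(1) by simp
      ultimately show ?thesis
        using x x' Fix_X by (auto simp: Aut_mult_apply)
    qed
    then show "\<sigma> \<otimes>\<^bsub>Aut G A X\<^esub> inv\<^bsub>Aut G A X\<^esub> \<tau> \<in> N"
      using \<sigma> \<tau> by (simp add: N_def)
  qed
  then show ?thesis
    using N by (simp add: Aut.finite_index_def N_def)
qed

lemma continuous_map_shift_subshift:
  "g \<in> carrier G \<Longrightarrow> continuous_map subshift_topology subshift_topology (shift G g)"
  by (intro continuous_map_into_subtopology continuous_map_from_subtopology continuous_map_shift)
    (auto simp: topspace_subshift_topology shift_in_subshift)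

lemma shift_image_subshift:
  assumes "g \<in> carrier G" "B \<subseteq> X"
  shows "shift G g ` B = shift G (inv g) -` B \<inter> X"
proof
  show "shift G g ` B \<subseteq> shift G (inv g) -` B \<inter> X"
  proof
    fix y assume "y \<in> shift G g ` B"
    then obtain x where x: "x \<in> B" "y = shift G g x"
      by blast
    then have "x \<in> X"
      using assms(2) by blast
    then have "shift G (inv g) y = x" "y \<in> X"
      using x(2) assms(1) subshift_subset_fullshift shift_inv_shift shift_in_subshift by auto
    then show "y \<in> shift G (inv g) -` B \<inter> X"
      using x(1) by simp
  qed
  show "shift G (inv g) -` B \<inter> X \<subseteq> shift G g ` B"
  proof
    fix x assume x: "x \<in> shift G (inv g) -` B \<inter> X"
    then have "x \<in> fullshift G A"
      using subshift_subset_fullshift by blast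
    then have "x = shift G g (shift G (inv g) x)"
      using assms(1) by (simp add: shift_shift_inv)
    then show "x \<in> shift G g ` B"
      using x by blast
  qed
qed

lemma
  shows sets_borel_subshift:
      "sets (borel_of subshift_topology) = sigma_sets X {U. openin subshift_topology U}"
    and space_borel_subshift: "space (borel_of subshift_topology) = X"
proof -
  have "{U. openin subshift_topology U} \<subseteq> Pow X"
    using openin_subset[of subshift_topology] by (auto simp: topspace_subshift_topology)
  then show "sets (borel_of subshift_topology) = sigma_sets X {U. openin subshift_topology U}"
    "space (borel_of subshift_topology) = X"
    by (simp_all add: borel_of_def)
qed

lemma shift_image_in_sets_borel:
  assumes g: "g \<in> carrier G" and B: "B \<in> sets (borel_of subshift_topology)"
  shows "shift G g ` B \<in> sets (borel_of subshift_topology)"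
proof -
  have opens: "{U. openin subshift_topology U} \<subseteq> Pow X"
    using openin_subset[of subshift_topology] by (auto simp: topspace_subshift_topology)
  have meas:
    "shift G (inv g) \<in> measurable (borel_of subshift_topology) (borel_of subshift_topology)"
    unfolding borel_of_def topspace_subshift_topology
  proof (rule measurable_measure_of[OF opens])
    show "shift G (inv g) \<in> space (sigma X {U. openin subshift_topology U}) \<rightarrow> X"
      using opens g shift_in_subshift by auto
    fix U assume "U \<in> {U. openin subshift_topology U}"
    then have "openin subshift_topology {x \<in> topspace subshift_topology. shift G (inv g) x \<in> U}"
      using continuous_map_shift_subshift[of "inv g"] g
      by (intro openin_continuous_map_preimage) auto
    moreover have "{x \<in> topspace subshift_topology. shift G (inv g) x \<in> U}
        = shift G (inv g) -` U \<inter> X"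
      unfolding topspace_subshift_topology by blast
    ultimately show "shift G (inv g) -` U \<inter> space (sigma X {U. openin subshift_topology U})
        \<in> sets (sigma X {U. openin subshift_topology U})"
      using opens by (simp add: sigma_sets.Basic)
  qed
  have "B \<subseteq> X"
    using sets.sets_into_space[OF B] by (simp add: space_borel_subshift)
  then show ?thesis
    using measurable_sets[OF meas B] g by (simp add: shift_image_subshift space_borel_subshift)
qed

lemma openin_moved_points:
  assumes "continuous_map subshift_topology subshift_topology \<sigma>"
  shows "openin subshift_topology {x \<in> X. \<sigma> x \<noteq> x}"
proof -
  have "closedin subshift_topology {x \<in> topspace subshift_topology. \<sigma> x = id x}"
    by (rule closedin_continuous_maps_eq[OF Hausdorff_space_subshift_topology assms
          continuous_map_id])
  then have "openin subshift_topology
      (topspace subshift_topology - {x \<in> topspace subshift_topology. \<sigma> x = id x})"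
    by (rule openin_diff[OF openin_topspace])
  moreover have "topspace subshift_topology - {x \<in> topspace subshift_topology. \<sigma> x = id x}
      = {x \<in> X. \<sigma> x \<noteq> x}"
    by (auto simp: topspace_subshift_topology)
  ultimately show ?thesis
    by simp
qed

lemma inj_on_shift_subshift: "g \<in> carrier G \<Longrightarrow> inj_on (shift G g) X"
  by (rule inj_on_inverseI[where g="shift G (inv g)"])
    (use subshift_subset_fullshift shift_inv_shift in blast)

end

section \<open>Subshifts with dense periodic configurations\<close>

locale periodic_dense_subshift = compact_subshift +
  assumes periodic_dense:
    "\<And>x E. x \<in> X \<Longrightarrow> finite E \<Longrightarrow> E \<subseteq> carrier G \<Longrightarrow> \<exists>z\<in>X. periodic G z \<and> (\<forall>h\<in>E. z h = x h)"
begin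

lemma periodic_in_openin:
  assumes "openin subshift_topology U" "u \<in> U"
  shows "\<exists>z\<in>U. periodic G z"
proof -
  obtain E where E: "finite E" "E \<subseteq> carrier G" "\<And>v. v \<in> X \<Longrightarrow> (\<forall>h\<in>E. v h = u h) \<Longrightarrow> v \<in> U"
    using openin_subshift_contains_cylinder[OF assms] by blast
  have "u \<in> X"
    using openin_subset[OF assms(1)] assms(2) by (auto simp: topspace_subshift_topology)
  then obtain z where "z \<in> X" "periodic G z" "\<forall>h\<in>E. z h = u h"
    using periodic_dense E(1,2) by blast
  then show ?thesis
    using E(3) by blast
qed

theorem surjunctive: "surjunctive G A X"
  unfolding surjunctive_def
proof (intro allI impI, elim conjE)
  fix \<tau> assume ca: "cellular_automaton G A X \<tau>" and inj: "inj_on \<tau> X"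
  have "compactin subshift_topology (\<tau> ` X)"
    using image_compactin[of subshift_topology X subshift_topology \<tau>] ca
      compact_space_subshift_topology
    by (simp add: compact_space_def topspace_subshift_topology cellular_automaton_def)
  then have "closedin subshift_topology (\<tau> ` X)"
    using compactin_imp_closedin Hausdorff_space_subshift_topology by blast
  then have open_complement: "openin subshift_topology (X - \<tau> ` X)"
    using openin_diff[OF openin_topspace] by (fastforce simp: topspace_subshift_topology)
  have "x \<in> \<tau> ` X" if x: "x \<in> X" for x
  proof (rule ccontr)
    assume "x \<notin> \<tau> ` X"
    then obtain z where z: "z \<in> X - \<tau> ` X" "periodic G z"
      using periodic_in_openin[OF open_complement] x by blast
    have "z \<in> Fix (stabilizer z)"
      using periodic_in_Fix_stabilizer z by auto
    also have "\<dots> = \<tau> ` Fix (stabilizer z)"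
      using cellular_automaton_image_Fix[OF ca inj] periodic_in_Fix_stabilizer z by auto
    also have "\<dots> \<subseteq> \<tau> ` X"
      by (auto simp: Fix_def)
    finally show False
      using z(1) by blast
  qed
  then show "\<tau> ` X = X"
    using cellular_automaton_into[OF ca] by blast
qed

theorem residually_finite_Aut: "residually_finite (Aut G A X)"
proof -
  interpret Aut: group "Aut G A X"
    by (rule group_Aut)
  show ?thesis
    unfolding Aut.residually_finite_iff
  proof
    fix \<sigma> assume \<sigma>: "\<sigma> \<in> carrier (Aut G A X) - {\<one>\<^bsub>Aut G A X\<^esub>}"
    obtain u where "u \<in> X" "\<sigma> u \<noteq> u"
    proof (rule ccontr)
      assume "\<not> thesis"
      then have "\<sigma> x = restrict id X x" for x
        using that \<sigma> by (cases "x \<in> X") (auto simp: Aut_simps extensional_def)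
      then have "\<sigma> = restrict id X"
        by (rule ext)
      then show False
        using \<sigma> by (simp add: Aut_simps)
    qed
    moreover have "openin subshift_topology {x \<in> X. \<sigma> x \<noteq> x}"
      using \<sigma> by (intro openin_moved_points) (simp add: Aut_simps cellular_automaton_def)
    ultimately obtain z where z: "z \<in> X" "\<sigma> z \<noteq> z" "periodic G z"
      using periodic_in_openin by blast
    show "\<exists>K. Aut.finite_index K \<and> \<sigma> \<notin> K"
      using finite_index_Aut_fixing_Fix periodic_in_Fix_stabilizer[OF z(1,3)] z(2) by blast
  qed
qed

lemma countable_dense_periodic:
  assumes "countable (carrier G)"
  obtains D where "countable D" "D \<subseteq> X" "\<And>d. d \<in> D \<Longrightarrow> periodic G d"
    "\<And>U. openin subshift_topology U \<Longrightarrow> U \<noteq> {} \<Longrightarrow> U \<inter> D \<noteq> {}"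
proof -
  define J where "J = {(E, restrict x E) | E x. finite E \<and> E \<subseteq> carrier G \<and> x \<in> X}"
  have "J \<subseteq> Sigma {E. finite E \<and> E \<subseteq> carrier G} (\<lambda>E. E \<rightarrow>\<^sub>E A)"
    by (auto simp: J_def subshift_in_alphabet)
  moreover have "countable (Sigma {E. finite E \<and> E \<subseteq> carrier G} (\<lambda>E. E \<rightarrow>\<^sub>E A))"
    using countable_Collect_finite_subset[OF assms] finite_alphabet
    by (intro countable_SIGMA) (auto intro: countable_finite simp: finite_PiE)
  ultimately have "countable J"
    by (rule countable_subset)
  have "\<forall>p\<in>J. \<exists>z. z \<in> X \<and> periodic G z \<and> (\<forall>h\<in>fst p. z h = snd p h)"
    using periodic_dense by (force simp: J_def)
  then obtain pick where pick:
    "\<And>p. p \<in> J \<Longrightarrow> pick p \<in> X \<and> periodic G (pick p) \<and> (\<forall>h\<in>fst p. pick p h = snd p h)"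
    using bchoice by metis
  show thesis
  proof (rule that[of "pick ` J"])
    show "countable (pick ` J)"
      using \<open>countable J\<close> by simp
    show "pick ` J \<subseteq> X" "\<And>d. d \<in> pick ` J \<Longrightarrow> periodic G d"
      using pick by auto
    fix U assume U: "openin subshift_topology U" "U \<noteq> {}"
    then obtain u where u: "u \<in> U"
      by blast
    then have "u \<in> X"
      using openin_subset[OF U(1)] by (auto simp: topspace_subshift_topology)
    obtain E where E: "finite E" "E \<subseteq> carrier G" "\<And>v. v \<in> X \<Longrightarrow> (\<forall>h\<in>E. v h = u h) \<Longrightarrow> v \<in> U"
      using openin_subshift_contains_cylinder[OF U(1) u] by blast
    then have "(E, restrict u E) \<in> J"
      using \<open>u \<in> X\<close> by (auto simp: J_def)
    then have "pick (E, restrict u E) \<in> U"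
      using pick E(3) by simp
    then show "U \<inter> pick ` J \<noteq> {}"
      using \<open>(E, restrict u E) \<in> J\<close> by blast
  qed
qed

theorem invariant_measure_full_support:
  assumes "countable (carrier G)" "X \<noteq> {}"
  shows "\<exists>\<mu>. prob_space \<mu> \<and> sets \<mu> = sets (borel_of subshift_topology) \<and>
           (\<forall>g\<in>carrier G. \<forall>B\<in>sets \<mu>. emeasure \<mu> (shift G g ` B) = emeasure \<mu> B) \<and>
           (\<forall>U. openin subshift_topology U \<and> U \<noteq> {} \<longrightarrow> emeasure \<mu> U > 0)"
proof -
  obtain D where D: "countable D" "D \<subseteq> X" "\<And>d. d \<in> D \<Longrightarrow> periodic G d"
    "\<And>U. openin subshift_topology U \<Longrightarrow> U \<noteq> {} \<Longrightarrow> U \<inter> D \<noteq> {}"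
    using countable_dense_periodic[OF assms(1)] by blast
  have "D \<noteq> {}"
    using D(4)[OF openin_topspace] assms(2) by (auto simp: topspace_subshift_topology)
  define z where "z = from_nat_into D"
  have z: "range z = D"
    unfolding z_def using \<open>D \<noteq> {}\<close> D(1) by simp
  define Y where "Y i = shift_orbit (z i)" for i
  have zX: "z i \<in> X" for i
    using z D(2) by auto
  have Y: "finite (Y i)" "Y i \<noteq> {}" "Y i \<subseteq> X" "z i \<in> Y i" for i
    using z D(3)[of "z i"] zX[of i] subshift_subset_fullshift self_in_shift_orbit[of "z i" A]
      shift_in_subshift
    by (auto simp: Y_def periodic_iff_finite_shift_orbit shift_orbit_def)
  define M where "M = sets (borel_of subshift_topology)"
  have M: "sigma_algebra X M"
    using sets.sigma_algebra_axioms[of "borel_of subshift_topology"]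
    by (simp add: M_def space_borel_subshift)
  define \<mu> where "\<mu> = uniform_mixture X M Y"
  have sets_\<mu>: "sets \<mu> = M"
    unfolding \<mu>_def by (rule sets_uniform_mixture[OF M])
  have invariant: "emeasure \<mu> (shift G g ` B) = emeasure \<mu> B"
    if g: "g \<in> carrier G" and B: "B \<in> M" for g B
  proof -
    have BX: "B \<subseteq> X"
      using sets.sets_into_space[of B "borel_of subshift_topology"] B
      by (simp add: M_def space_borel_subshift)
    have "card (Y i \<inter> shift G g ` B) = card (Y i \<inter> B)" for i
    proof -
      have "Y i \<inter> shift G g ` B = shift G g ` Y i \<inter> shift G g ` B"
        using shift_image_shift_orbit[OF g, of "z i"] by (simp add: Y_def)
      also have "\<dots> = shift G g ` (Y i \<inter> B)"
        by (rule inj_on_image_Int[OF inj_on_shift_subshift[OF g] Y(3) BX, symmetric])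
      moreover have "inj_on (shift G g) (Y i \<inter> B)"
        using inj_on_subset[OF inj_on_shift_subshift[OF g]] BX by blast
      ultimately show ?thesis
        by (simp add: card_image)
    qed
    moreover have "shift G g ` B \<in> M"
      using shift_image_in_sets_borel[OF g] B by (simp add: M_def)
    ultimately show ?thesis
      unfolding \<mu>_def using emeasure_uniform_mixture[OF M Y(1)] B by simp
  qed
  have full_support: "emeasure \<mu> U > 0" if U: "openin subshift_topology U" "U \<noteq> {}" for U
  proof -
    obtain i where i: "z i \<in> U"
      using D(4)[OF U] z by blast
    have "U \<in> M"
      using U(1) by (simp add: M_def sets_borel_subshift sigma_sets.Basic)
    define f where "f j = ennreal ((1/2)^Suc j / real (card (Y j))) * of_nat (card (Y j \<inter> U))" for j
    have "0 < f i"
      using Y(1,2,4)[of i] i by (auto simp: f_def ennreal_zero_less_mult_iff card_gt_0_iff)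
    also have "\<dots> \<le> (\<Sum>j. f j)"
      using sum_le_suminf[OF summableI, of "{i}" f] by simp
    also have "\<dots> = emeasure \<mu> U"
      unfolding \<mu>_def f_def using emeasure_uniform_mixture[OF M Y(1) \<open>U \<in> M\<close>] by simp
    finally show ?thesis .
  qed
  show ?thesis
  proof (intro exI[of _ \<mu>] conjI ballI allI impI)
    show "prob_space \<mu>"
      unfolding \<mu>_def by (rule prob_space_uniform_mixture[OF M Y(1-3)])
    show "sets \<mu> = sets (borel_of subshift_topology)"
      using sets_\<mu> by (simp add: M_def)
  qed (use invariant full_support sets_\<mu> in auto)
qed

end

theorem corollary1p2:
  fixes G :: "('g, 'b) monoid_scheme" and A :: "'a set" and X :: "('g \<Rightarrow> 'a) set"
  assumes "group G" and "residually_finite G"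
    and "finite A"
    and "subshift G A X" and "finite_type G A X" and "strongly_irreducible G X"
    and "\<exists>x\<in>X. periodic G x"
  shows "surjunctive G A X \<and> residually_finite (Aut G A X) \<and>
    (countable (carrier G) \<longrightarrow>
      (\<exists>\<mu>. prob_space \<mu> \<and> sets \<mu> = sets (borel_of (subtopology (prodiscrete G A) X)) \<and>
           (\<forall>g\<in>carrier G. \<forall>B\<in>sets \<mu>. emeasure \<mu> (shift G g ` B) = emeasure \<mu> B) \<and>
           (\<forall>U. openin (subtopology (prodiscrete G A) X) U \<and> U \<noteq> {} \<longrightarrow> emeasure \<mu> U > 0)))"
proof -
  obtain y where y: "y \<in> X" "periodic G y"
    using assms(7) by blast
  have "periodic_dense_subshift G A X"
  proof (intro periodic_dense_subshift.intro compact_subshift.intro compact_subshift_axioms.intro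
      periodic_dense_subshift_axioms.intro)
    fix x E assume "x \<in> X" "finite E" "E \<subseteq> carrier G"
    then show "\<exists>z\<in>X. periodic G z \<and> (\<forall>h\<in>E. z h = x h)"
      using group.periodic_dense_if_strongly_irreducible[OF assms(1,2,4,5,6) y] by blast
  qed (use assms in auto)
  then interpret periodic_dense_subshift G A X .
  show ?thesis
    using surjunctive residually_finite_Aut invariant_measure_full_support y(1) by blast
qed

end
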